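(* Let $M$ be a nonzero real symmetric matrix and let $\xi$ be a principal eigenvector of $M$. Then for any $\eta\ne0$ with $M\eta\neq 0$, $$\angle(\eta,M\eta)\le3\,\angle(\eta,\xi).$$
   Context: For nonzero $\xi,\eta\in\mathbb{R}^p$, $\angle(\xi,\eta)=\cos^{-1}\bigl(|\xi^T\eta|/(\|\xi\|_2\|\eta\|_2)\bigr)\in[0,\pi/2]$. A principal eigenvector of a symmetric matrix $M$ is an eigenvector associated with an eigenvalue of largest absolute value, so that $\|M\xi\|_2=\|M\|_2\|\xi\|_2$ where $\|M\|_2$ is the spectral (operator 2-) norm. *)

theory Defs
  imports "HOL-Analysis.Analysis"
begin

definition vangle :: "real ^ 'n \<Rightarrow> real ^ 'n \<Rightarrow> real" where
  "vangle x y = arccos (\<bar>x \<bullet> y\<bar> / (norm x * norm y))"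

definition principal_eigenvector :: "real ^ 'n ^ 'n \<Rightarrow> real ^ 'n \<Rightarrow> bool" where
  "principal_eigenvector M \<xi> \<longleftrightarrow> \<xi> \<noteq> 0 \<and>
     (\<exists>l. M *v \<xi> = l *\<^sub>R \<xi> \<and>
        (\<forall>m v. v \<noteq> 0 \<and> M *v v = m *\<^sub>R v \<longrightarrow> \<bar>m\<bar> \<le> \<bar>l\<bar>))"

end

theory Submission
  imports Defs
begin

text \<open>Write \<open>\<eta> = p + q\<close> with \<open>p\<close> along the unit principal eigenvector \<open>e\<close> and \<open>q \<bottom> e\<close>,
  and let \<open>\<lambda>\<close> be the principal eigenvalue. For symmetric \<open>M\<close> the principal eigenvalue has
  \<open>|\<lambda>| = \<parallel>M\<parallel>\<close>, so \<open>|q \<bullet> Mq| \<le> |\<lambda>| \<parallel>q\<parallel>\<^sup>2\<close>, and hence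
  \<open>|\<eta> \<bullet> M\<eta>| \<ge> |\<lambda>| (\<parallel>p\<parallel>\<^sup>2 - \<parallel>q\<parallel>\<^sup>2)\<close>, while \<open>\<parallel>M\<eta>\<parallel> \<le> |\<lambda>| \<parallel>\<eta>\<parallel>\<close>. Dividing gives
  \<open>cos \<angle>(\<eta>, M\<eta>) \<ge> 2 cos\<^sup>2 \<angle>(\<eta>, \<xi>) - 1 = cos (2 \<angle>(\<eta>, \<xi>))\<close>, i.e. even
  \<open>\<angle>(\<eta>, M\<eta>) \<le> 2 \<angle>(\<eta>, \<xi>)\<close>.\<close>

lemma matrix_vector_mult_self_adjoint:
  fixes M :: "real ^ 'n ^ 'n"
  assumes "transpose M = M"
  shows "(M *v x) \<bullet> y = x \<bullet> (M *v y)"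
  by (metis assms dot_lmul_matrix vector_transpose_matrix)

lemma linear_norm_attains_bound:
  fixes f :: "'a::euclidean_space \<Rightarrow> 'b::real_normed_vector"
  assumes "linear f"
  obtains v where "norm v = 1" "\<And>x. norm (f x) \<le> norm (f v) * norm x"
proof -
  have "sphere (0::'a) 1 \<noteq> {}" by simp
  moreover have "continuous_on (sphere 0 1) (\<lambda>x. norm (f x))"
    using assms by (intro continuous_intros linear_continuous_on linear_conv_bounded_linear[THEN iffD1])
  ultimately obtain v where v: "v \<in> sphere 0 1"
    and max: "\<And>y. y \<in> sphere 0 1 \<Longrightarrow> norm (f y) \<le> norm (f v)"
    using continuous_attains_sup[OF compact_sphere] by blast
  have "norm (f x) \<le> norm (f v) * norm x" for x
  proof (cases "x = 0")
    case False
    then have "norm (f (x /\<^sub>R norm x)) \<le> norm (f v)" by (intro max) simp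
    with False show ?thesis
      by (simp add: linear_scale[OF assms] field_simps)
  qed (simp add: linear_0[OF assms])
  with v that show ?thesis by simp
qed

text \<open>A maximiser \<open>v\<close> of \<open>\<parallel>f x\<parallel>\<close> on the unit sphere minimises the nonnegative quadratic form
  \<open>g x = s\<^sup>2 \<parallel>x\<parallel>\<^sup>2 - \<parallel>f x\<parallel>\<^sup>2\<close>, so the bilinear form of \<open>g\<close> vanishes at \<open>v\<close>; by
  self-adjointness this says \<open>f (f v) = s\<^sup>2 v\<close>.\<close>
lemma self_adjoint_maximiser_eigen_square:
  fixes f :: "'a::real_inner \<Rightarrow> 'a"
  assumes f: "linear f" and adj: "\<And>x y. f x \<bullet> y = x \<bullet> f y"
    and v: "norm v = 1" and bound: "\<And>x. norm (f x) \<le> norm (f v) * norm x"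
  shows "f (f v) = (norm (f v))\<^sup>2 *\<^sub>R v"
proof -
  define s where "s = norm (f v)"
  define g where "g x = s\<^sup>2 * (x \<bullet> x) - f x \<bullet> f x" for x
  have g_nonneg: "g x \<ge> 0" for x
  proof -
    have "(norm (f x))\<^sup>2 \<le> (s * norm x)\<^sup>2"
      using bound[of x] unfolding s_def by (intro power_mono) auto
    then show ?thesis unfolding g_def by (simp add: power_mult_distrib dot_square_norm)
  qed
  have g_v: "g v = 0" unfolding g_def s_def using v by (simp add: dot_square_norm)
  have "f (f v) \<bullet> u = s\<^sup>2 * (v \<bullet> u)" for u
  proof -
    define c where "c = s\<^sup>2 * (v \<bullet> u) - f v \<bullet> f u"
    have expand: "g (v + t *\<^sub>R u) = 2 * t * c + t\<^sup>2 * g u" for t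
      unfolding g_def c_def using g_v[unfolded g_def]
      by (simp add: linear_add[OF f] linear_scale[OF f] inner_add_left inner_add_right
          inner_commute algebra_simps power2_eq_square)
    have "c = 0"
    proof (rule ccontr)
      assume "c \<noteq> 0"
      define K where "K = g u + 1"
      have K: "K > 0" using g_nonneg[of u] K_def by simp
      have gu: "g u = K - 1" using K_def by simp
      have "g (v + (- c / K) *\<^sub>R u) = c\<^sup>2 * (- g u - 2) / K\<^sup>2"
        unfolding expand gu using K by (simp add: field_simps power2_eq_square)
      also have "\<dots> < 0" using \<open>c \<noteq> 0\<close> K g_nonneg[of u]
        by (intro divide_neg_pos mult_pos_neg) auto
      finally show False using g_nonneg by (metis not_le)
    qed
    then show ?thesis unfolding c_def using adj[of "f v" u] by simp
  qed
  from this[of "f (f v) - s\<^sup>2 *\<^sub>R v"]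
  have "(f (f v) - s\<^sup>2 *\<^sub>R v) \<bullet> (f (f v) - s\<^sup>2 *\<^sub>R v) = 0"
    by (simp add: inner_diff_left)
  then show ?thesis by (simp add: s_def)
qed

lemma self_adjoint_eigenvalue_norm:
  fixes f :: "'a::euclidean_space \<Rightarrow> 'a"
  assumes f: "linear f" and adj: "\<And>x y. f x \<bullet> y = x \<bullet> f y"
  obtains m w where "w \<noteq> 0" "f w = m *\<^sub>R w" "\<And>x. norm (f x) \<le> \<bar>m\<bar> * norm x"
proof -
  obtain v where v: "norm v = 1" and bound: "\<And>x. norm (f x) \<le> norm (f v) * norm x"
    using linear_norm_attains_bound[OF f] by blast
  define s where "s = norm (f v)"
  have ff: "f (f v) = s\<^sup>2 *\<^sub>R v"
    using self_adjoint_maximiser_eigen_square[OF f adj v bound] by (simp add: s_def)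
  have bound_s: "norm (f x) \<le> \<bar>s\<bar> * norm x" for x
    using bound[of x] by (simp add: s_def)
  \<comment> \<open>\<open>(f - s)(f + s) v = 0\<close>: either \<open>f v + s v\<close> is an eigenvector for \<open>s\<close>, or \<open>v\<close> is one for \<open>-s\<close>.\<close>
  define w where "w = f v + s *\<^sub>R v"
  have fw: "f w = s *\<^sub>R w"
    unfolding w_def using ff
    by (simp add: linear_add[OF f] linear_scale[OF f] power2_eq_square algebra_simps)
  show ?thesis
  proof (cases "w = 0")
    case True
    then have "f v = (- s) *\<^sub>R v" unfolding w_def by (simp add: eq_neg_iff_add_eq_0)
    moreover have "v \<noteq> 0" using v by auto
    moreover have "norm (f x) \<le> \<bar>- s\<bar> * norm x" for x using bound_s by simp
    ultimately show ?thesis by (intro that)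
  next
    case False
    then show ?thesis using fw bound_s by (rule that)
  qed
qed

lemma principal_eigenvector_norm_bound:
  fixes M :: "real ^ 'n ^ 'n"
  assumes "transpose M = M" and "principal_eigenvector M \<xi>"
  obtains l where "M *v \<xi> = l *\<^sub>R \<xi>" "\<And>x. norm (M *v x) \<le> \<bar>l\<bar> * norm x"
proof -
  obtain l where l: "M *v \<xi> = l *\<^sub>R \<xi>"
    and max: "\<And>m v. v \<noteq> 0 \<Longrightarrow> M *v v = m *\<^sub>R v \<Longrightarrow> \<bar>m\<bar> \<le> \<bar>l\<bar>"
    using assms(2) unfolding principal_eigenvector_def by blast
  obtain m w where "w \<noteq> 0" "M *v w = m *\<^sub>R w" and bound: "\<And>x. norm (M *v x) \<le> \<bar>m\<bar> * norm x"
    using self_adjoint_eigenvalue_norm[OF matrix_vector_mul_linear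
          matrix_vector_mult_self_adjoint[OF assms(1)]] by blast
  from \<open>w \<noteq> 0\<close> \<open>M *v w = m *\<^sub>R w\<close> have "\<bar>m\<bar> \<le> \<bar>l\<bar>" by (rule max)
  then have "norm (M *v x) \<le> \<bar>l\<bar> * norm x" for x
    using bound[of x] by (meson mult_right_mono norm_ge_zero order_trans)
  with l that show ?thesis by blast
qed

lemma self_adjoint_quadratic_form_lower_bound:
  fixes f :: "'a::real_inner \<Rightarrow> 'a"
  assumes f: "linear f" and adj: "\<And>x y. f x \<bullet> y = x \<bullet> f y"
    and e: "norm e = 1" "f e = l *\<^sub>R e" and bound: "\<And>x. norm (f x) \<le> \<bar>l\<bar> * norm x"
  shows "\<bar>l\<bar> * (2 * (x \<bullet> e)\<^sup>2 - (norm x)\<^sup>2) \<le> \<bar>x \<bullet> f x\<bar>"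
proof -
  define d where "d = x \<bullet> e"
  define q where "q = x - d *\<^sub>R e"
  have ee: "e \<bullet> e = 1" using e(1) by (simp add: dot_square_norm)
  have qe: "q \<bullet> e = 0" unfolding q_def d_def using ee by (simp add: inner_diff_left)
  have eq: "e \<bullet> f q = 0" using adj[of e q] qe by (simp add: e(2) inner_commute)
  have x: "x = d *\<^sub>R e + q" unfolding q_def by simp
  have "x \<bullet> x = d\<^sup>2 + q \<bullet> q"
    using qe ee by (simp add: x inner_add_left inner_add_right inner_commute power2_eq_square)
  then have qq: "q \<bullet> q = (norm x)\<^sup>2 - d\<^sup>2" by (simp add: power2_norm_eq_inner)
  have form: "x \<bullet> f x = l * d\<^sup>2 + q \<bullet> f q"
    using qe eq ee
    by (simp add: x linear_add[OF f] linear_scale[OF f] e(2) inner_add_left inner_add_right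
        inner_commute power2_eq_square)
  have "\<bar>q \<bullet> f q\<bar> \<le> norm q * (\<bar>l\<bar> * norm q)"
    using Cauchy_Schwarz_ineq2[of q "f q"] by (meson bound mult_left_mono norm_ge_zero order_trans)
  also have "\<dots> = \<bar>l\<bar> * ((norm x)\<^sup>2 - d\<^sup>2)"
    using qq by (simp add: dot_square_norm power2_eq_square)
  finally have "\<bar>q \<bullet> f q\<bar> \<le> \<bar>l\<bar> * ((norm x)\<^sup>2 - d\<^sup>2)" .
  moreover have "\<bar>l\<bar> * d\<^sup>2 - \<bar>q \<bullet> f q\<bar> \<le> \<bar>x \<bullet> f x\<bar>"
    unfolding form by (simp add: abs_mult)
  ultimately show ?thesis unfolding d_def by (simp add: algebra_simps)
qed

lemma abs_inner_div_norms_bounds: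
  "0 \<le> \<bar>x \<bullet> y\<bar> / (norm x * norm y)" "\<bar>x \<bullet> y\<bar> / (norm x * norm y) \<le> 1"
  by (cases "x = 0 \<or> y = 0") (auto simp: divide_le_eq Cauchy_Schwarz_ineq2)

lemma cos_vangle: "cos (vangle x y) = \<bar>x \<bullet> y\<bar> / (norm x * norm y)"
  unfolding vangle_def using abs_inner_div_norms_bounds[of x y]
  by (intro cos_arccos; linarith)

lemma vangle_bounds: "0 \<le> vangle x y" "vangle x y \<le> pi / 2"
  unfolding vangle_def using abs_inner_div_norms_bounds[of x y]
  by (intro arccos_lbound arccos_le_pi2; linarith)+

lemma vangle_principal_eigenvector_le_double:
  fixes M :: "real ^ 'n ^ 'n"
  assumes "transpose M = M" "principal_eigenvector M \<xi>" "\<eta> \<noteq> 0" "M *v \<eta> \<noteq> 0"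
  shows "vangle \<eta> (M *v \<eta>) \<le> 2 * vangle \<eta> \<xi>"
proof -
  obtain l where l: "M *v \<xi> = l *\<^sub>R \<xi>" and bound: "\<And>x. norm (M *v x) \<le> \<bar>l\<bar> * norm x"
    using principal_eigenvector_norm_bound[OF assms(1,2)] by blast
  have "\<xi> \<noteq> 0" using assms(2) by (simp add: principal_eigenvector_def)
  define e where "e = \<xi> /\<^sub>R norm \<xi>"
  define a where "a = norm \<eta>"
  define d where "d = \<eta> \<bullet> e"
  have a: "a > 0" using assms(3) by (simp add: a_def)
  have "norm (M *v \<eta>) \<le> \<bar>l\<bar> * a" using bound by (simp add: a_def)
  moreover have "norm (M *v \<eta>) > 0" using assms(4) by simp
  ultimately have l_pos: "\<bar>l\<bar> > 0" by (cases "l = 0") auto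
  have lower: "\<bar>l\<bar> * (2 * d\<^sup>2 - a\<^sup>2) \<le> \<bar>\<eta> \<bullet> (M *v \<eta>)\<bar>"
    unfolding a_def d_def
    using self_adjoint_quadratic_form_lower_bound[of "(*v) M" e l \<eta>, OF matrix_vector_mul_linear]
      matrix_vector_mult_self_adjoint[OF assms(1)] bound \<open>\<xi> \<noteq> 0\<close>
    by (simp add: e_def l matrix_vector_mult_scaleR)
  have cos_xi: "cos (vangle \<eta> \<xi>) = \<bar>d\<bar> / a"
    using \<open>\<xi> \<noteq> 0\<close> by (simp add: cos_vangle d_def e_def a_def abs_mult field_simps)
  have "cos (2 * vangle \<eta> \<xi>) = (2 * d\<^sup>2 - a\<^sup>2) / a\<^sup>2"
    using a by (simp only: cos_double_cos cos_xi) (simp add: field_simps)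
  also have "\<dots> \<le> cos (vangle \<eta> (M *v \<eta>))"
  proof (cases "2 * d\<^sup>2 - a\<^sup>2 \<le> 0")
    case True
    then have "(2 * d\<^sup>2 - a\<^sup>2) / a\<^sup>2 \<le> 0" using a by (simp add: divide_nonpos_pos)
    then show ?thesis
      using abs_inner_div_norms_bounds(1)[of \<eta> "M *v \<eta>"] cos_vangle[of \<eta> "M *v \<eta>"] by linarith
  next
    case False
    have "(2 * d\<^sup>2 - a\<^sup>2) / a\<^sup>2 = \<bar>l\<bar> * (2 * d\<^sup>2 - a\<^sup>2) / (a * (\<bar>l\<bar> * a))"
      using a l_pos by (simp add: power2_eq_square)
    also have "\<dots> \<le> \<bar>\<eta> \<bullet> (M *v \<eta>)\<bar> / (a * norm (M *v \<eta>))"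
    proof (rule frac_le)
      show "a * norm (M *v \<eta>) \<le> a * (\<bar>l\<bar> * a)"
        using \<open>norm (M *v \<eta>) \<le> \<bar>l\<bar> * a\<close> a by simp
    qed (use lower \<open>norm (M *v \<eta>) > 0\<close> a in auto)
    finally show ?thesis by (simp add: cos_vangle a_def)
  qed
  finally show ?thesis
    using cos_mono_le_eq[of "2 * vangle \<eta> \<xi>" "vangle \<eta> (M *v \<eta>)"]
      vangle_bounds[of \<eta> \<xi>] vangle_bounds[of \<eta> "M *v \<eta>"] by auto
qed

text \<open>The hypothesis \<open>M \<noteq> 0\<close> is implied by \<open>M *v \<eta> \<noteq> 0\<close>.\<close>
theorem lemma1:
  fixes M :: "real ^ 'n ^ 'n" and \<xi> \<eta> :: "real ^ 'n"
  assumes "transpose M = M"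
    and "M \<noteq> 0"
    and "principal_eigenvector M \<xi>"
    and "\<eta> \<noteq> 0"
    and "M *v \<eta> \<noteq> 0"
  shows "vangle \<eta> (M *v \<eta>) \<le> 3 * vangle \<eta> \<xi>"
  using vangle_principal_eigenvector_le_double[OF assms(1,3-5)] vangle_bounds(1)[of \<eta> \<xi>]
  by linarith

end
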